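(* In the $L^\infty$ setting of the context with $E=\mathbb C$ (so $D=L^\infty_\mu(\Omega)$ and $A=L^\infty_\mu(\Omega)$), if $G$ acts metrically freely then for every finite $F\subset G$ and $a_g\in L^\infty_\mu(\Omega)$, $$\Big\|\sum_{g\in F}a_gT_g\Big\|=\operatorname{ess\,sup}_{x\in\Omega}\sum_{g\in F}|a_g(x)|.$$
   Context: $L^\infty$ setting: $(\Omega,\mu)$ is a measure space with $\sigma$-additive $\sigma$-finite measure $\mu$, $G$ a discrete group, $\{\alpha_g\}_{g\in G}$ a group of invertible measurable maps of $\Omega$ ($\alpha_{gh}=\alpha_g\circ\alpha_h$, $\alpha_e=\mathrm{id}$) such that $\alpha_g,\alpha_g^{-1}$ preserve $\mu$-null sets. $A=L^\infty_\mu(\Omega)$ acts on $D=L^\infty_\mu(\Omega)$ by multiplication and $(T_gf)(x)=f(\alpha_g^{-1}(x))$. $G$ acts metrically freely if for every finite $\{g_1,\dots,g_k\}\subset G$ and measurable $\Delta$ with $\mu(\Delta)>0$ there is measurable $\Delta'\subset\Delta$, $\mu(\Delta')>0$, with $\mu(\alpha_{g_i}(\Delta')\cap\alpha_{g_j}(\Delta'))=0$ for $i\neq j$. *)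

theory Defs
  imports "HOL-Probability.Probability"
begin

definition Linf_norm :: "'a measure \<Rightarrow> ('a \<Rightarrow> complex) \<Rightarrow> ereal" where
  "Linf_norm M f = esssup M (\<lambda>x. ereal (cmod (f x)))"

definition Linf :: "'a measure \<Rightarrow> ('a \<Rightarrow> complex) set" where
  "Linf M = {f \<in> borel_measurable M. Linf_norm M f < \<infinity>}"

text \<open>Translation operator T_g f = f o alpha_g^{-1}, with alpha_g^{-1} = alpha_{-g}.\<close>
definition transl :: "('g::group_add \<Rightarrow> 'a \<Rightarrow> 'a) \<Rightarrow> 'g \<Rightarrow> ('a \<Rightarrow> complex) \<Rightarrow> 'a \<Rightarrow> complex" where
  "transl \<alpha> g f = (\<lambda>x. f (\<alpha> (- g) x))"

definition weighted_shift_op ::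
  "('g::group_add \<Rightarrow> 'a \<Rightarrow> 'a) \<Rightarrow> 'g set \<Rightarrow> ('g \<Rightarrow> 'a \<Rightarrow> complex) \<Rightarrow> ('a \<Rightarrow> complex) \<Rightarrow> 'a \<Rightarrow> complex" where
  "weighted_shift_op \<alpha> F a f = (\<lambda>x. \<Sum>g\<in>F. a g x * transl \<alpha> g f x)"

definition Linf_opnorm :: "'a measure \<Rightarrow> (('a \<Rightarrow> complex) \<Rightarrow> 'a \<Rightarrow> complex) \<Rightarrow> ereal" where
  "Linf_opnorm M \<Phi> = (SUP f \<in> {f \<in> borel_measurable M. Linf_norm M f \<le> 1}. Linf_norm M (\<Phi> f))"

definition metrically_free :: "'a measure \<Rightarrow> ('g \<Rightarrow> 'a \<Rightarrow> 'a) \<Rightarrow> bool" where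
  "metrically_free M \<alpha> \<longleftrightarrow>
     (\<forall>K \<Delta>. finite K \<longrightarrow> \<Delta> \<in> sets M \<longrightarrow> emeasure M \<Delta> > 0 \<longrightarrow>
        (\<exists>\<Delta>'. \<Delta>' \<in> sets M \<and> \<Delta>' \<subseteq> \<Delta> \<and> emeasure M \<Delta>' > 0 \<and>
           (\<forall>g\<in>K. \<forall>h\<in>K. g \<noteq> h \<longrightarrow> emeasure M (\<alpha> g ` \<Delta>' \<inter> \<alpha> h ` \<Delta>') = 0)))"

end

theory Submission
  imports Defs
begin

text \<open>The inequality \<open>\<le>\<close> is the pointwise triangle inequality, valid almost everywhere because
  the action maps null sets to null sets. For \<open>\<ge>\<close>, take \<open>c\<close> below the essential supremum of
  \<open>\<Sum>|a\<^sub>g|\<close>; metric freeness gives a set \<open>\<Delta>\<close> of positive measure on which \<open>\<Sum>|a\<^sub>g| > c\<close> and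
  whose translates \<open>\<alpha>\<^sub>-\<^sub>g(\<Delta>)\<close>, \<open>g \<in> F\<close>, are almost disjoint. The function of modulus at most one
  equal to \<open>conj (sgn (a\<^sub>g (\<alpha>\<^sub>g y)))\<close> on \<open>\<alpha>\<^sub>-\<^sub>g(\<Delta>)\<close> aligns the phases of all summands, so
  \<open>(\<Sum> a\<^sub>g T\<^sub>g f)(x) = \<Sum>|a\<^sub>g(x)|\<close> for almost every \<open>x \<in> \<Delta>\<close>.\<close>

lemma mult_cnj_sgn: "z * cnj (sgn z) = complex_of_real (cmod z)"
proof (cases "z = 0")
  case False
  then show ?thesis
    by (simp add: sgn_eq complex_norm_square[symmetric] power2_eq_square)
qed simp

lemma borel_measurable_cnj [measurable]: "cnj \<in> borel_measurable borel"
  by (intro borel_measurable_continuous_onI continuous_intros)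

lemma Linf_norm_le_iff:
  assumes "f \<in> borel_measurable M"
  shows "Linf_norm M f \<le> ereal c \<longleftrightarrow> (AE x in M. cmod (f x) \<le> c)"
proof
  assume le: "Linf_norm M f \<le> ereal c"
  have "AE x in M. ereal (cmod (f x)) \<le> Linf_norm M f"
    unfolding Linf_norm_def by (rule esssup_AE)
  then show "AE x in M. cmod (f x) \<le> c"
    by (rule eventually_mono) (use le order_trans ereal_less_eq(3) in metis)
next
  assume "AE x in M. cmod (f x) \<le> c"
  then show "Linf_norm M f \<le> ereal c"
    unfolding Linf_norm_def using assms by (intro esssup_I) auto
qed

lemma esssup_ge_of_pos_measure:
  assumes "\<Delta> \<in> sets M" "emeasure M \<Delta> > 0" "AE x in M. x \<in> \<Delta> \<longrightarrow> c \<le> f x"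
  shows "c \<le> esssup M f"
proof (rule ccontr)
  assume "\<not> c \<le> esssup M f"
  note esssup_AE[of f M] assms(3)
  then have "AE x in M. x \<notin> \<Delta>"
    by eventually_elim (use \<open>\<not> c \<le> esssup M f\<close> order_trans in blast)
  then have "\<Delta> \<in> null_sets M"
    using assms(1) by (simp add: AE_iff_null_sets)
  with assms(2) show False
    by (simp add: null_setsD1)
qed

definition phase_alignment ::
  "('g \<Rightarrow> 'a \<Rightarrow> 'a) \<Rightarrow> 'g set \<Rightarrow> ('g \<Rightarrow> 'a \<Rightarrow> complex) \<Rightarrow> 'a set \<Rightarrow> 'a \<Rightarrow> complex" where
  "phase_alignment \<alpha> F a \<Delta> y =
     (\<Sum>g\<in>F. if \<alpha> g y \<in> \<Delta> \<and> (\<forall>h\<in>F - {g}. \<alpha> h y \<notin> \<Delta>) then cnj (sgn (a g (\<alpha> g y))) else 0)"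

lemma phase_alignment_eq:
  assumes "finite F" "g \<in> F" "\<alpha> g y \<in> \<Delta>" "\<forall>h\<in>F - {g}. \<alpha> h y \<notin> \<Delta>"
  shows "phase_alignment \<alpha> F a \<Delta> y = cnj (sgn (a g (\<alpha> g y)))"
proof -
  have "phase_alignment \<alpha> F a \<Delta> y =
      (\<Sum>h\<in>{g}. if \<alpha> h y \<in> \<Delta> \<and> (\<forall>k\<in>F - {h}. \<alpha> k y \<notin> \<Delta>) then cnj (sgn (a h (\<alpha> h y))) else 0)"
    unfolding phase_alignment_def using assms by (intro sum.mono_neutral_right) auto
  with assms(3,4) show ?thesis by simp
qed

lemma norm_phase_alignment_le:
  assumes "finite F"
  shows "cmod (phase_alignment \<alpha> F a \<Delta> y) \<le> 1"
proof (cases "\<exists>g\<in>F. \<alpha> g y \<in> \<Delta> \<and> (\<forall>h\<in>F - {g}. \<alpha> h y \<notin> \<Delta>)")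
  case True
  then show ?thesis using assms by (auto simp: phase_alignment_eq norm_sgn)
next
  case False
  then have "phase_alignment \<alpha> F a \<Delta> y = 0"
    unfolding phase_alignment_def by (intro sum.neutral) auto
  then show ?thesis by simp
qed

locale nonsingular_action =
  fixes M :: "'a measure" and \<alpha> :: "'g::group_add \<Rightarrow> 'a \<Rightarrow> 'a"
  assumes measurable_action [measurable]: "\<And>g. \<alpha> g \<in> M \<rightarrow>\<^sub>M M"
    and action_zero: "\<And>x. x \<in> space M \<Longrightarrow> \<alpha> 0 x = x"
    and action_add: "\<And>g h x. x \<in> space M \<Longrightarrow> \<alpha> (g + h) x = \<alpha> g (\<alpha> h x)"
    and null_sets_vimage_action: "\<And>g N. N \<in> null_sets M \<Longrightarrow> \<alpha> g -` N \<inter> space M \<in> null_sets M"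
begin

lemma action_in_space: "x \<in> space M \<Longrightarrow> \<alpha> g x \<in> space M"
  using measurable_space[OF measurable_action] .

lemma action_neg_cancel: "x \<in> space M \<Longrightarrow> \<alpha> g (\<alpha> (- g) x) = x"
  by (metis action_add action_zero add.right_inverse)

lemma action_cancel_neg: "x \<in> space M \<Longrightarrow> \<alpha> (- g) (\<alpha> g x) = x"
  by (metis action_add action_zero add.left_inverse)

lemma vimage_action_eq_image:
  assumes "\<Delta> \<subseteq> space M"
  shows "\<alpha> g -` \<Delta> \<inter> space M = \<alpha> (- g) ` \<Delta>"
  using assms by (auto simp: action_neg_cancel action_cancel_neg action_in_space intro!: image_eqI)

lemma AE_action:
  assumes "AE x in M. P x"
  shows "AE x in M. P (\<alpha> g x)"
proof -
  from assms obtain N where N: "{x \<in> space M. \<not> P x} \<subseteq> N" "N \<in> null_sets M"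
    by (metis AE_E null_setsI)
  show ?thesis
    by (rule AE_I'[OF null_sets_vimage_action[OF N(2), of g]]) (use N(1) action_in_space in auto)
qed

lemma measurable_weighted_shift_op:
  assumes "f \<in> borel_measurable M" "\<And>g. g \<in> F \<Longrightarrow> a g \<in> borel_measurable M"
  shows "weighted_shift_op \<alpha> F a f \<in> borel_measurable M"
  using assms unfolding weighted_shift_op_def transl_def by measurable

lemma measurable_phase_alignment:
  assumes "finite F" "\<Delta> \<in> sets M" "\<And>g. g \<in> F \<Longrightarrow> a g \<in> borel_measurable M"
  shows "phase_alignment \<alpha> F a \<Delta> \<in> borel_measurable M"
proof -
  note [measurable] = assms(2,3)
  have [measurable]: "finite (F - {g})" for g
    using assms(1) by simp
  show ?thesis
    unfolding phase_alignment_def by measurable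
qed

lemma Linf_opnorm_weighted_shift_op_le:
  assumes "finite F" "\<And>g. g \<in> F \<Longrightarrow> a g \<in> borel_measurable M"
  shows "Linf_opnorm M (weighted_shift_op \<alpha> F a) \<le> esssup M (\<lambda>x. ereal (\<Sum>g\<in>F. cmod (a g x)))"
  unfolding Linf_opnorm_def
proof (rule SUP_least)
  fix f assume "f \<in> {f \<in> borel_measurable M. Linf_norm M f \<le> 1}"
  then have f_meas [measurable]: "f \<in> borel_measurable M" and "Linf_norm M f \<le> 1"
    by auto
  then have f_bound: "AE x in M. cmod (f x) \<le> 1"
    using Linf_norm_le_iff[of f M 1] by (simp add: one_ereal_def)
  have "AE x in M. \<forall>g\<in>F. cmod (f (\<alpha> (- g) x)) \<le> 1"
    by (rule AE_finite_allI[OF assms(1) AE_action[OF f_bound]])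
  then have "AE x in M. cmod (weighted_shift_op \<alpha> F a f x) \<le> (\<Sum>g\<in>F. cmod (a g x))"
  proof eventually_elim
    case (elim x)
    have "cmod (weighted_shift_op \<alpha> F a f x) \<le> (\<Sum>g\<in>F. cmod (a g x) * cmod (f (\<alpha> (- g) x)))"
      unfolding weighted_shift_op_def transl_def norm_mult[symmetric] by (rule norm_sum)
    also have "\<dots> \<le> (\<Sum>g\<in>F. cmod (a g x))"
      using elim by (intro sum_mono) (auto intro: mult_left_le)
    finally show ?case .
  qed
  then show "Linf_norm M (weighted_shift_op \<alpha> F a f) \<le> esssup M (\<lambda>x. ereal (\<Sum>g\<in>F. cmod (a g x)))"
    unfolding Linf_norm_def
  proof (intro esssup_AE_mono)
    show "(\<lambda>x. ereal (cmod (weighted_shift_op \<alpha> F a f x))) \<in> borel_measurable M"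
      using measurable_weighted_shift_op[OF f_meas assms(2)] by measurable
  qed simp
qed

definition ae_disjoint_preimages :: "'g set \<Rightarrow> 'a set \<Rightarrow> bool" where
  "ae_disjoint_preimages F \<Delta> \<longleftrightarrow>
     (\<forall>g\<in>F. \<forall>h\<in>F. g \<noteq> h \<longrightarrow> \<alpha> g -` \<Delta> \<inter> \<alpha> h -` \<Delta> \<inter> space M \<in> null_sets M)"

lemma metrically_free_obtains_ae_disjoint_preimages:
  assumes "metrically_free M \<alpha>" "finite F" "S \<in> sets M" "emeasure M S > 0"
  obtains \<Delta> where "\<Delta> \<in> sets M" "\<Delta> \<subseteq> S" "emeasure M \<Delta> > 0" "ae_disjoint_preimages F \<Delta>"
proof -
  obtain \<Delta> where \<Delta>: "\<Delta> \<in> sets M" "\<Delta> \<subseteq> S" "emeasure M \<Delta> > 0"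
    and disjoint: "\<And>g h. g \<in> uminus ` F \<Longrightarrow> h \<in> uminus ` F \<Longrightarrow> g \<noteq> h \<Longrightarrow>
        emeasure M (\<alpha> g ` \<Delta> \<inter> \<alpha> h ` \<Delta>) = 0"
    using assms unfolding metrically_free_def by (metis finite_imageI)
  have "ae_disjoint_preimages F \<Delta>"
    unfolding ae_disjoint_preimages_def
  proof (intro ballI impI)
    fix g h assume "g \<in> F" "h \<in> F" "g \<noteq> h"
    have "\<alpha> g -` \<Delta> \<inter> \<alpha> h -` \<Delta> \<inter> space M = \<alpha> (- g) ` \<Delta> \<inter> \<alpha> (- h) ` \<Delta>"
      using vimage_action_eq_image[OF sets.sets_into_space[OF \<Delta>(1)]] by blast
    moreover have "\<alpha> g -` \<Delta> \<inter> \<alpha> h -` \<Delta> \<inter> space M \<in> sets M"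
      using \<Delta>(1) by measurable
    ultimately show "\<alpha> g -` \<Delta> \<inter> \<alpha> h -` \<Delta> \<inter> space M \<in> null_sets M"
      using disjoint[of "- g" "- h"] \<open>g \<in> F\<close> \<open>h \<in> F\<close> \<open>g \<noteq> h\<close> by (auto intro: null_setsI)
  qed
  with \<Delta> that show thesis by blast
qed

lemma weighted_shift_op_phase_alignment:
  assumes "finite F" "ae_disjoint_preimages F \<Delta>"
  shows "AE x in M. x \<in> \<Delta> \<longrightarrow>
           weighted_shift_op \<alpha> F a (phase_alignment \<alpha> F a \<Delta>) x = of_real (\<Sum>g\<in>F. cmod (a g x))"
proof -
  have no_overlap: "AE y in M. \<alpha> g y \<in> \<Delta> \<longrightarrow> \<alpha> h y \<notin> \<Delta>"
    if "g \<in> F" "h \<in> F - {g}" for g h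
    using assms(2) that unfolding ae_disjoint_preimages_def
    by (intro AE_I'[of "\<alpha> g -` \<Delta> \<inter> \<alpha> h -` \<Delta> \<inter> space M"]) auto
  have "AE x in M. \<alpha> g (\<alpha> (- g) x) \<in> \<Delta> \<longrightarrow> \<alpha> h (\<alpha> (- g) x) \<notin> \<Delta>"
    if "g \<in> F" "h \<in> F - {g}" for g h
    using AE_action[OF no_overlap[OF that]] .
  then have "AE x in M. \<forall>g\<in>F. \<forall>h\<in>F - {g}. \<alpha> g (\<alpha> (- g) x) \<in> \<Delta> \<longrightarrow> \<alpha> h (\<alpha> (- g) x) \<notin> \<Delta>"
    using assms(1) by (intro AE_finite_allI) auto
  with AE_space show ?thesis
  proof eventually_elim
    case (elim x)
    show ?case
    proof
      assume "x \<in> \<Delta>"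
      have "a g x * phase_alignment \<alpha> F a \<Delta> (\<alpha> (- g) x) = of_real (cmod (a g x))" if "g \<in> F" for g
      proof -
        have "\<alpha> g (\<alpha> (- g) x) = x"
          using elim by (simp add: action_neg_cancel)
        moreover have "phase_alignment \<alpha> F a \<Delta> (\<alpha> (- g) x) = cnj (sgn (a g (\<alpha> g (\<alpha> (- g) x))))"
          using elim \<open>x \<in> \<Delta>\<close> that \<open>\<alpha> g (\<alpha> (- g) x) = x\<close> by (intro phase_alignment_eq assms(1)) auto
        ultimately show ?thesis
          by (simp add: mult_cnj_sgn)
      qed
      then show "weighted_shift_op \<alpha> F a (phase_alignment \<alpha> F a \<Delta>) x = of_real (\<Sum>g\<in>F. cmod (a g x))"
        unfolding weighted_shift_op_def transl_def by simp
    qed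
  qed
qed

lemma esssup_le_Linf_opnorm_weighted_shift_op:
  assumes "metrically_free M \<alpha>" "finite F"
    and [measurable]: "\<And>g. g \<in> F \<Longrightarrow> a g \<in> borel_measurable M"
  shows "esssup M (\<lambda>x. ereal (\<Sum>g\<in>F. cmod (a g x))) \<le> Linf_opnorm M (weighted_shift_op \<alpha> F a)"
proof (rule dense_le)
  fix y assume "y < esssup M (\<lambda>x. ereal (\<Sum>g\<in>F. cmod (a g x)))"
  then obtain c where "y < ereal c" and c: "ereal c < esssup M (\<lambda>x. ereal (\<Sum>g\<in>F. cmod (a g x)))"
    using ereal_dense2 by blast
  define S where "S = {x \<in> space M. ereal c < ereal (\<Sum>g\<in>F. cmod (a g x))}"
  have "S \<in> sets M"
    unfolding S_def by measurable
  moreover have "emeasure M S > 0"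
    unfolding S_def using c by (intro esssup_pos_measure) measurable
  ultimately obtain \<Delta> where \<Delta>: "\<Delta> \<in> sets M" "\<Delta> \<subseteq> S" "emeasure M \<Delta> > 0"
    and disjoint: "ae_disjoint_preimages F \<Delta>"
    by (rule metrically_free_obtains_ae_disjoint_preimages[OF assms(1,2)])
  define f where "f = phase_alignment \<alpha> F a \<Delta>"
  have f_meas: "f \<in> borel_measurable M"
    unfolding f_def using assms(2) \<Delta>(1) assms(3) by (rule measurable_phase_alignment)
  have "Linf_norm M f \<le> 1"
    unfolding one_ereal_def using f_meas
    by (subst Linf_norm_le_iff) (simp_all add: f_def norm_phase_alignment_le assms(2))
  have "ereal c \<le> Linf_norm M (weighted_shift_op \<alpha> F a f)"
    unfolding Linf_norm_def
  proof (rule esssup_ge_of_pos_measure[OF \<Delta>(1,3)])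
    show "AE x in M. x \<in> \<Delta> \<longrightarrow> ereal c \<le> ereal (cmod (weighted_shift_op \<alpha> F a f x))"
      using weighted_shift_op_phase_alignment[OF assms(2) disjoint, of a]
      by eventually_elim (use \<Delta>(2) in \<open>auto simp: S_def f_def abs_of_nonneg sum_nonneg simp del: of_real_sum\<close>)
  qed
  also have "\<dots> \<le> Linf_opnorm M (weighted_shift_op \<alpha> F a)"
    unfolding Linf_opnorm_def using f_meas \<open>Linf_norm M f \<le> 1\<close> by (intro SUP_upper) auto
  finally show "y \<le> Linf_opnorm M (weighted_shift_op \<alpha> F a)"
    using \<open>y < ereal c\<close> by simp
qed

end

theorem mainTheorem8:
  fixes M :: "'a measure" and \<alpha> :: "'g::group_add \<Rightarrow> 'a \<Rightarrow> 'a"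
    and F :: "'g set" and a :: "'g \<Rightarrow> 'a \<Rightarrow> complex"
  assumes "sigma_finite_measure M"
    and "\<And>g. \<alpha> g \<in> M \<rightarrow>\<^sub>M M"
    and "\<And>x. x \<in> space M \<Longrightarrow> \<alpha> 0 x = x"
    and "\<And>g h x. x \<in> space M \<Longrightarrow> \<alpha> (g + h) x = \<alpha> g (\<alpha> h x)"
    and "\<And>g N. N \<in> null_sets M \<Longrightarrow> \<alpha> g -` N \<inter> space M \<in> null_sets M"
    and "metrically_free M \<alpha>"
    and "finite F"
    and "\<And>g. g \<in> F \<Longrightarrow> a g \<in> Linf M"
  shows "Linf_opnorm M (weighted_shift_op \<alpha> F a) =
         esssup M (\<lambda>x. ereal (\<Sum>g\<in>F. cmod (a g x)))"
proof -
  interpret nonsingular_action M \<alpha>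
    using assms(2-5) by unfold_locales
  have "a g \<in> borel_measurable M" if "g \<in> F" for g
    using assms(8)[OF that] by (simp add: Linf_def)
  then show ?thesis
    using Linf_opnorm_weighted_shift_op_le esssup_le_Linf_opnorm_weighted_shift_op assms(6,7)
    by (blast intro: antisym)
qed

end
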